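(* For all sufficiently large natural numbers $n$, the number of primes smaller than $n$ is greater than the number of SP numbers smaller than $n$.
   Context: A Square-Prime (SP) number is a positive integer of the form $p a^2$ where $p$ is a prime and $a \ge 2$ is a natural number (i.e. $a \neq 1$). *)

theory Defs
  imports "HOL-Computational_Algebra.Primes"
begin

definition SP :: "nat \<Rightarrow> bool" where
  "SP m \<longleftrightarrow> (\<exists>p a. prime p \<and> a \<ge> 2 \<and> m = p * a^2)"

end

theory Submission
  imports Defs "HOL-Number_Theory.Prime_Powers" "HOL-Real_Asymp.Real_Asymp"
begin

text \<open>
  Chebyshev's elementary method: the weight of \<open>\<Lambda>(d)\<close> in
  \<open>ln (N! (N/30)! / ((N/2)! (N/3)! (N/5)!))\<close> is \<open>\<lfloor>k\<rfloor> - \<lfloor>k/2\<rfloor> - \<lfloor>k/3\<rfloor> - \<lfloor>k/5\<rfloor> + \<lfloor>k/30\<rfloor>\<close>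
  with \<open>k = N/d\<close>, which lies in \<open>{0, 1}\<close> and equals 1 for \<open>1 \<le> k < 6\<close>. With Stirling's
  estimate this gives \<open>A N - O(log N) \<le> \<psi>(N) \<le> 6/5 A N + O(\<surd>N)\<close> for
  \<open>A = ln 2/2 + ln 3/3 + ln 5/5 - ln 30/30 \<approx> 0.92\<close>, hence \<open>\<pi>(n) \<ge> (A - o(1)) n / ln n\<close>.

  An SP number \<open>p a\<^sup>2 < n\<close> has \<open>p \<le> n/a\<^sup>2\<close>. The pairs with \<open>a \<ge> ln\<^sup>2 n\<close> or \<open>p \<le> n / ln\<^sup>4 n\<close>
  number \<open>O(n / ln\<^sup>2 n)\<close>; the remaining primes have \<open>ln p \<ge> ln n - 4 ln ln n\<close>, so weighing them
  by \<open>ln p\<close> bounds their number by \<open>\<Sum>\<^sub>a\<^sub>\<ge>\<^sub>2 \<psi>(n/a\<^sup>2) / ln p \<le> 6/5 \<cdot> 25/36 \<cdot> A n / ln n (1 + o(1))\<close>,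
  using \<open>\<Sum>\<^sub>a\<^sub>\<ge>\<^sub>2 1/a\<^sup>2 \<le> 25/36\<close>. As \<open>6/5 \<cdot> 25/36 = 5/6 < 1\<close>, the primes win.
\<close>

section \<open>Stirling-type bounds for \<open>ln n!\<close>\<close>

lemma x_ln_x_diff_bounds:
  fixes x y :: real
  assumes "0 < x" "x \<le> y"
  shows "(y - x) * ln x \<le> (y * ln y - y) - (x * ln x - x)"
    and "(y * ln y - y) - (x * ln x - x) \<le> (y - x) * ln y"
proof -
  have "x * ln (y / x) \<le> x * (y / x - 1)"
    using assms by (intro mult_left_mono ln_le_minus_one) auto
  moreover have "ln (y / x) = ln y - ln x" "x * (y / x - 1) = y - x"
    using assms by (simp_all add: ln_div field_simps)
  ultimately have "x * (ln y - ln x) \<le> y - x"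
    by simp
  then show "(y * ln y - y) - (x * ln x - x) \<le> (y - x) * ln y"
    by (simp add: algebra_simps)
  have "y * ln (x / y) \<le> y * (x / y - 1)"
    using assms by (intro mult_left_mono ln_le_minus_one) auto
  moreover have "ln (x / y) = ln x - ln y" "y * (x / y - 1) = x - y"
    using assms by (simp_all add: ln_div field_simps)
  ultimately have "y * (ln x - ln y) \<le> x - y"
    by simp
  then show "(y - x) * ln x \<le> (y * ln y - y) - (x * ln x - x)"
    by (simp add: algebra_simps)
qed

lemma ln_fact_Suc: "ln (fact (Suc k) :: real) = ln (Suc k) + ln (fact k)"
  by (simp add: ln_mult)

lemma ln_fact_lower:
  assumes "1 \<le> m"
  shows "real m * ln m - m + 1 \<le> ln (fact m)"
  using assms
proof (induction m rule: dec_induct)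
  case (step k)
  have "(real (Suc k) * ln (Suc k) - Suc k) - (real k * ln k - k) \<le> ln (Suc k)"
    using x_ln_x_diff_bounds(2)[of k "Suc k"] step by simp
  with step.IH show ?case unfolding ln_fact_Suc by simp
qed simp

lemma ln_fact_upper: "ln (fact m) \<le> (real m + 1) * ln (real m + 1) - real m"
proof (induction m)
  case (Suc k)
  have "ln (real k + 1) \<le> ((real k + 2) * ln (real k + 2) - (real k + 2))
      - ((real k + 1) * ln (real k + 1) - (real k + 1))"
    using x_ln_x_diff_bounds(1)[of "real k + 1" "real k + 2"] by simp
  with Suc.IH show ?case unfolding ln_fact_Suc by (simp add: add.commute)
qed simp

lemma ln_fact_approx:
  fixes x :: real
  assumes "real m \<le> x" "x < real m + 1"
  shows "\<bar>ln (fact m) - (x * ln x - x)\<bar> \<le> ln (x + 1) + 1"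
proof (cases "m = 0")
  case True
  then have x: "0 \<le> x" "x < 1" using assms by auto
  have "x * ln x \<le> 0"
    using x by (cases "x = 0") (auto intro: mult_nonneg_nonpos)
  moreover have "-1 \<le> x * ln x - x"
  proof (cases "x = 0")
    case False
    then show ?thesis using x_ln_x_diff_bounds(2)[of x 1] x by simp
  qed simp
  moreover have "0 \<le> ln (x + 1)" "ln (fact m) = (0::real)" using x True by simp_all
  ultimately show ?thesis using x unfolding abs_le_iff by linarith
next
  case False
  have x: "1 \<le> x" using assms False by linarith
  have "x * ln x - x - (real m * ln m - m) \<le> (x - m) * ln x"
    using x_ln_x_diff_bounds(2)[of m x] assms False by simp
  also have "\<dots> \<le> ln (x + 1)"
    using assms x by (intro order.trans[OF mult_left_le_one_le]) auto
  finally have "x * ln x - x - ln (x + 1) - 1 \<le> ln (fact m)"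
    using ln_fact_lower[of m] False by simp
  moreover have "((real m + 1) * ln (real m + 1) - (real m + 1)) - (x * ln x - x)
      \<le> (real m + 1 - x) * ln (real m + 1)"
    using x_ln_x_diff_bounds(2)[of x "real m + 1"] assms x by simp
  moreover have "(real m + 1 - x) * ln (real m + 1) \<le> ln (x + 1)"
    using assms x by (intro order.trans[OF mult_left_le_one_le]) auto
  ultimately show ?thesis
    using ln_fact_upper[of m] by (simp add: abs_le_iff)
qed

section \<open>Chebyshev bounds for \<open>\<psi>\<close>\<close>

definition chebyshev_A :: real where
  "chebyshev_A = ln 2 / 2 + ln 3 / 3 + ln 5 / 5 - ln 30 / 30"

lemma ln_30: "ln (30 :: real) = ln 2 + ln 3 + ln 5"
proof -
  have "ln (30 :: real) = ln (2 * 3 * 5)" by simp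
  also have "\<dots> = ln 2 + ln 3 + ln 5" by (simp only: ln_mult) simp_all
  finally show ?thesis .
qed

lemma chebyshev_A_pos: "0 < chebyshev_A"
proof -
  have "0 < ln (2 :: real)" "0 < ln (3 :: real)" "0 < ln (5 :: real)" by simp_all
  with ln_30 show ?thesis unfolding chebyshev_A_def by linarith
qed

definition chebyshev_F :: "nat \<Rightarrow> real" where
  "chebyshev_F N = ln (fact N) - ln (fact (N div 2)) - ln (fact (N div 3)) - ln (fact (N div 5))
     + ln (fact (N div 30))"

lemma ln_fact_div_approx:
  "\<bar>ln (fact (N div k)) - (N / k * ln (N / k) - N / k)\<bar> \<le> ln (real N + 1) + 1"
proof -
  have "real (N div k) \<le> real N / real k" "real N / real k < real (N div k) + 1"
    using floor_divide_of_nat_eq[of N k, where 'a = real] by (simp_all add: floor_eq_iff)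
  then have "\<bar>ln (fact (N div k)) - (N / k * ln (N / k) - N / k)\<bar> \<le> ln (N / k + 1) + 1"
    by (rule ln_fact_approx)
  moreover have "real N / real k \<le> real N"
    by (cases "k = 0") (simp_all add: divide_le_eq mult_le_cancel_left1)
  then have "ln (real N / real k + 1) \<le> ln (real N + 1)"
    by (simp add: add_nonneg_pos)
  ultimately show ?thesis by simp
qed

lemma chebyshev_F_approx: "\<bar>chebyshev_F N - chebyshev_A * N\<bar> \<le> 5 * (ln (real N + 1) + 1)"
proof (cases "N = 0")
  case False
  define B where "B = ln (real N + 1) + 1"
  define e where "e k = ln (fact (N div k)) - (N / k * ln (N / k) - N / k)" for k :: nat
  have e_bound: "\<bar>e k\<bar> \<le> B" for k
    unfolding e_def B_def by (rule ln_fact_div_approx)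
  have "chebyshev_F N - chebyshev_A * N = e 1 - e 2 - e 3 - e 5 + e 30"
    using False ln_30 by (simp add: e_def chebyshev_F_def chebyshev_A_def ln_div field_simps)
  also have "\<bar>e 1 - e 2 - e 3 - e 5 + e 30\<bar> \<le> 5 * B"
    using e_bound[of 1] e_bound[of 2] e_bound[of 3] e_bound[of 5] e_bound[of 30]
    unfolding abs_le_iff by linarith
  finally show ?thesis unfolding B_def .
qed (simp add: chebyshev_F_def)

lemma ln_fact_eq_sum_mangoldt: "ln (fact N :: real) = (\<Sum>d\<in>{1..N}. mangoldt d * real (N div d))"
proof (induction N)
  case (Suc N)
  have "{d. d dvd Suc N} = {d \<in> {1..Suc N}. d dvd Suc N}"
    by (auto simp: Suc_le_eq dvd_imp_le intro: Nat.gr0I)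
  then have "ln (real (Suc N)) = sum mangoldt {d \<in> {1..Suc N}. d dvd Suc N}"
    using mangoldt_sum[of "Suc N", where ?'a = real] by simp
  also have "\<dots> = (\<Sum>d\<in>{1..Suc N}. mangoldt d * of_bool (d dvd Suc N))"
    unfolding sum.inter_filter[OF finite_atLeastAtMost] by (intro sum.cong) auto
  finally have "ln (fact (Suc N) :: real) = (\<Sum>d\<in>{1..Suc N}. mangoldt d * of_bool (d dvd Suc N))
      + (\<Sum>d\<in>{1..Suc N}. mangoldt d * real (N div d))"
    unfolding ln_fact_Suc Suc.IH by (simp add: sum.cl_ivl_Suc)
  moreover have "real (Suc N div d) = of_bool (d dvd Suc N) + real (N div d)" for d
    by (simp add: div_Suc dvd_eq_mod_eq_0)
  ultimately show ?case
    by (simp add: distrib_left sum.distrib)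
qed simp

lemma ln_fact_div_eq_sum_mangoldt:
  "ln (fact (N div k) :: real) = (\<Sum>d\<in>{1..N}. mangoldt d * real (N div d div k))"
proof -
  have swap: "N div k div d = N div d div k" for d
    by (metis div_mult2_eq mult.commute)
  have "ln (fact (N div k) :: real) = (\<Sum>d\<in>{1..N div k}. mangoldt d * real (N div d div k))"
    unfolding ln_fact_eq_sum_mangoldt swap ..
  also have "\<dots> = (\<Sum>d\<in>{1..N}. mangoldt d * real (N div d div k))"
    by (intro sum.mono_neutral_left) (auto simp: div_le_dividend le_trans swap[symmetric])
  finally show ?thesis .
qed

definition chebyshev_weight :: "nat \<Rightarrow> real" where
  "chebyshev_weight k = real k - real (k div 2) - real (k div 3) - real (k div 5) + real (k div 30)"

lemma chebyshev_weight_mod_30: "chebyshev_weight k = chebyshev_weight (k mod 30)"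
proof -
  define q r where "q = k div 30" and "r = k mod 30"
  have k: "k = r + 30 * q" and "r < 30" unfolding q_def r_def by simp_all
  then have "k div 2 = r div 2 + 15 * q" "k div 3 = r div 3 + 10 * q" "k div 5 = r div 5 + 6 * q"
    "k div 30 = q" "r div 30 = 0"
    by simp_all
  then show ?thesis
    unfolding chebyshev_weight_def r_def[symmetric] by (simp add: k)
qed

lemma chebyshev_weight_bounds: "0 \<le> chebyshev_weight k" "chebyshev_weight k \<le> 1"
proof -
  have "\<forall>r\<in>{..<30}. 0 \<le> chebyshev_weight r \<and> chebyshev_weight r \<le> 1"
    by (simp add: chebyshev_weight_def lessThan_nat_numeral)
  then show "0 \<le> chebyshev_weight k" "chebyshev_weight k \<le> 1"
    by (subst chebyshev_weight_mod_30; simp)+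
qed

lemma chebyshev_weight_eq_1:
  assumes "1 \<le> k" "k \<le> 5"
  shows "chebyshev_weight k = 1"
proof -
  have "k \<in> {1, 2, 3, 4, 5}" using assms by auto
  then show ?thesis by (auto simp: chebyshev_weight_def)
qed

lemma chebyshev_F_eq_sum: "chebyshev_F N = (\<Sum>d\<in>{1..N}. mangoldt d * chebyshev_weight (N div d))"
  unfolding chebyshev_F_def chebyshev_weight_def ln_fact_div_eq_sum_mangoldt
    ln_fact_eq_sum_mangoldt[of N]
  by (simp add: algebra_simps sum.distrib sum_subtractf)

definition primes_psi :: "nat \<Rightarrow> real" where
  "primes_psi N = (\<Sum>d\<in>{1..N}. mangoldt d)"

lemma chebyshev_F_le_primes_psi: "chebyshev_F N \<le> primes_psi N"
  unfolding chebyshev_F_eq_sum primes_psi_def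
  by (intro sum_mono mult_right_le_one_le mangoldt_nonneg chebyshev_weight_bounds)

lemma primes_psi_diff_le_chebyshev_F: "primes_psi N - primes_psi (N div 6) \<le> chebyshev_F N"
proof -
  have weight_1: "chebyshev_weight (N div d) = 1" if "d \<in> {N div 6 + 1..N}" for d
  proof (rule chebyshev_weight_eq_1)
    from that have d: "0 < d" "d \<le> N" "N < 6 * d" by (auto simp: div_less_iff_less_mult mult.commute)
    then show "1 \<le> N div d" by (simp add: Suc_le_eq div_greater_zero_iff)
    have "N div d < 6" using d by (simp add: div_less_iff_less_mult mult.commute)
    then show "N div d \<le> 5" by simp
  qed
  have "{1..N} = {1..N div 6} \<union> {N div 6 + 1..N}" by auto
  then have "primes_psi N - primes_psi (N div 6) = (\<Sum>d\<in>{N div 6 + 1..N}. mangoldt d)"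
    unfolding primes_psi_def by (simp add: sum.union_disjoint ivl_disj_int)
  also have "\<dots> = (\<Sum>d\<in>{N div 6 + 1..N}. mangoldt d * chebyshev_weight (N div d))"
    using weight_1 by simp
  also have "\<dots> \<le> chebyshev_F N"
    unfolding chebyshev_F_eq_sum
    by (intro sum_mono2) (auto intro: mult_nonneg_nonneg mangoldt_nonneg chebyshev_weight_bounds)
  finally show ?thesis .
qed

lemma primes_psi_lower: "chebyshev_A * N - 5 * (ln (real N + 1) + 1) \<le> primes_psi N"
  using chebyshev_F_le_primes_psi[of N] chebyshev_F_approx[of N] by (simp add: abs_le_iff)

lemma ln_add_one_le_sqrt:
  assumes "1 \<le> N"
  shows "ln (real N + 1) + 1 \<le> 3 * sqrt N"
proof -
  have "ln (real N + 1) = 2 * ln (sqrt (real N + 1))"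
    by (simp add: ln_sqrt)
  also have "\<dots> \<le> 2 * (sqrt (real N + 1) - 1)"
    using ln_le_minus_one[of "sqrt (real N + 1)"] by simp
  also have "sqrt (real N + 1) \<le> sqrt (9 / 4 * real N)"
    using assms by (intro real_sqrt_le_mono) simp
  also have "\<dots> = 3 / 2 * sqrt N"
    by (simp add: real_sqrt_mult real_sqrt_divide)
  finally show ?thesis by simp
qed

text \<open>Iterating \<open>\<psi>(N) - \<psi>(N/6) \<le> A N + O(\<surd>N)\<close> gives the factor \<open>1 + 1/6 + 1/36 + \<dots> = 6/5\<close>.\<close>

lemma primes_psi_upper: "primes_psi N \<le> 6 / 5 * chebyshev_A * N + 30 * sqrt N"
proof (induction N rule: less_induct)
  case (less N)
  show ?case
  proof (cases "N = 0")
    case False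
    have div_6: "real (N div 6) \<le> real N / 6"
      by (simp add: of_nat_div_le_of_nat)
    then have "6 / 5 * chebyshev_A * (N div 6) \<le> 6 / 5 * chebyshev_A * (N / 6)"
      using chebyshev_A_pos by simp
    moreover have "sqrt (N div 6) \<le> sqrt (N / 4)"
      using div_6 by (intro real_sqrt_le_mono) simp
    moreover have "sqrt (N / 4) = sqrt N / 2"
      by (simp add: real_sqrt_divide)
    moreover have "primes_psi (N div 6) \<le> 6 / 5 * chebyshev_A * (N div 6) + 30 * sqrt (N div 6)"
      using False by (intro less.IH) simp
    ultimately show ?thesis
      using primes_psi_diff_le_chebyshev_F[of N] chebyshev_F_approx[of N] ln_add_one_le_sqrt[of N] False
      by (simp add: abs_le_iff)
  qed (simp add: primes_psi_def)
qed

section \<open>Primes versus \<open>\<psi>\<close>\<close>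

definition primes_pi :: "nat \<Rightarrow> nat" where
  "primes_pi N = card {p. p \<le> N \<and> prime p}"

lemma primes_pi_le: "primes_pi N \<le> N"
proof -
  have "primes_pi N \<le> card {1..N}"
    unfolding primes_pi_def by (intro card_mono) (auto simp: Suc_le_eq prime_gt_0_nat)
  then show ?thesis by simp
qed

lemma card_prime_powers_le:
  fixes p N :: nat
  assumes "prime p"
  shows "real (card {k \<in> {1..N}. p ^ k \<le> N}) * ln p \<le> ln N"
proof (cases "{k \<in> {1..N}. p ^ k \<le> N} = {}")
  case False
  define K where "K = {k \<in> {1..N}. p ^ k \<le> N}"
  define m where "m = Max K"
  have "m \<in> K" using False unfolding m_def K_def by (intro Max_in) auto
  have "card K \<le> card {1..m}"
    by (intro card_mono) (auto simp: m_def K_def)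
  then have "real (card K) * ln p \<le> m * ln p"
    using assms by (intro mult_right_mono) (auto simp: Suc_le_eq prime_gt_0_nat)
  also have "\<dots> = ln (p ^ m)"
    by (simp add: ln_realpow)
  also have "\<dots> \<le> ln N"
    using \<open>m \<in> K\<close> assms by (simp add: K_def prime_gt_0_nat)
  finally show ?thesis unfolding K_def .
next
  case True
  have "0 \<le> ln (real N)" by (cases N) auto
  then show ?thesis unfolding True by simp
qed

lemma primes_psi_le_primes_pi: "primes_psi N \<le> primes_pi N * ln N"
proof -
  define P where "P = {p. p \<le> N \<and> prime p}"
  define E where "E p = {k \<in> {1..N}. p ^ k \<le> N}" for p
  have "finite P" unfolding P_def by simp
  have exponent_le: "k \<le> N" if "prime p" "p ^ k \<le> N" for p k
  proof -
    have "k < 2 ^ k" by (rule less_exp)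
    also have "\<dots> \<le> p ^ k" using prime_ge_2_nat[OF \<open>prime p\<close>] by (rule power_mono) simp
    finally show ?thesis using \<open>p ^ k \<le> N\<close> by simp
  qed
  have bij: "bij_betw (\<lambda>(p, k). p ^ k) (SIGMA p:P. E p) {d \<in> {1..N}. primepow d}"
  proof (rule bij_betw_imageI)
    show "inj_on (\<lambda>(p, k). p ^ k) (SIGMA p:P. E p)"
      by (auto simp: inj_on_def P_def E_def prime_power_inj'')
    show "(\<lambda>(p, k). p ^ k) ` (SIGMA p:P. E p) = {d \<in> {1..N}. primepow d}"
      by (auto simp: P_def E_def primepow_def Suc_le_eq prime_gt_0_nat exponent_le
               intro: order.trans[OF self_le_power[OF prime_ge_1_nat]] image_eqI[of _ _ "(p, k)" for p k])
  qed
  have "primes_psi N = (\<Sum>d\<in>{d \<in> {1..N}. primepow d}. mangoldt d)"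
    unfolding primes_psi_def by (rule sum.mono_neutral_right) (auto simp: mangoldt_def)
  also have "\<dots> = (\<Sum>(p, k)\<in>(SIGMA p:P. E p). mangoldt (p ^ k))"
    using bij by (simp add: sum.reindex_bij_betw[symmetric] case_prod_unfold)
  also have "\<dots> = (\<Sum>p\<in>P. \<Sum>k\<in>E p. mangoldt (p ^ k))"
    using \<open>finite P\<close> by (intro sum.Sigma[symmetric]) (auto simp: E_def)
  also have "\<dots> = (\<Sum>p\<in>P. real (card (E p)) * ln p)"
    by (intro sum.cong) (auto simp: P_def E_def)
  also have "\<dots> \<le> (\<Sum>p\<in>P. ln N)"
  proof (rule sum_mono)
    fix p assume "p \<in> P"
    then show "real (card (E p)) * ln p \<le> ln N"
      unfolding E_def by (intro card_prime_powers_le) (simp add: P_def)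
  qed
  finally show ?thesis by (simp add: primes_pi_def P_def)
qed

lemma primes_pi_le_primes_psi:
  assumes "1 < X"
  shows "real (primes_pi N) \<le> X + primes_psi N / ln X"
proof -
  define P where "P = {p. p \<le> N \<and> prime p}"
  have "P = {p \<in> P. real p \<le> X} \<union> {p \<in> P. X < real p}" by auto
  then have "card P \<le> card {p \<in> P. real p \<le> X} + card {p \<in> P. X < real p}"
    by (metis card_Un_le)
  moreover have "card {p \<in> P. real p \<le> X} \<le> card {1..nat \<lfloor>X\<rfloor>}"
    by (intro card_mono) (auto simp: P_def Suc_le_eq prime_gt_0_nat le_nat_floor)
  moreover have "real (card {p \<in> P. X < real p}) * ln X \<le> primes_psi N"
  proof -
    have "real (card {p \<in> P. X < real p}) * ln X = (\<Sum>p\<in>{p \<in> P. X < real p}. ln X)"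
      by simp
    also have "\<dots> \<le> (\<Sum>p\<in>{p \<in> P. X < real p}. mangoldt p)"
      using assms by (intro sum_mono) (auto simp: P_def)
    also have "\<dots> \<le> primes_psi N"
      unfolding primes_psi_def
      by (intro sum_mono2) (auto simp: P_def Suc_le_eq prime_gt_0_nat mangoldt_nonneg)
    finally show ?thesis .
  qed
  then have "real (card {p \<in> P. X < real p}) \<le> primes_psi N / ln X"
    using assms by (simp add: pos_le_divide_eq)
  moreover have "real (nat \<lfloor>X\<rfloor>) \<le> X" using assms by linarith
  ultimately show ?thesis
    unfolding primes_pi_def P_def[symmetric] by (simp add: of_nat_mono)
qed

section \<open>Counting SP numbers\<close>

lemma sum_inverse_squares_le:
  assumes "2 \<le> c"
  shows "(\<Sum>a\<in>{c..B}. 1 / real a ^ 2) \<le> 1 / (real c - 1)"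
proof (cases "c \<le> B")
  case True
  have "(\<Sum>a\<in>{c..B}. 1 / real a ^ 2) \<le> (\<Sum>a\<in>{c..B}. 1 / real (a - 1) - 1 / real a)"
  proof (intro sum_mono)
    fix a assume "a \<in> {c..B}"
    then have "2 \<le> real a" using assms by simp
    then show "1 / real a ^ 2 \<le> 1 / real (a - 1) - 1 / real a"
      by (simp add: of_nat_diff field_simps power2_eq_square)
  qed
  also have "\<dots> = 1 / real (c - 1) - 1 / real B"
    using sum_telescope''[of "c - 1" B "\<lambda>a. - 1 / real a"] True assms by simp
  also have "\<dots> \<le> 1 / (real c - 1)"
    using assms by (simp add: of_nat_diff)
  finally show ?thesis .
qed (use assms in simp)

lemma sum_inverse_squares_from_2_le: "(\<Sum>a\<in>{2..<c}. 1 / real a ^ 2) \<le> 25 / 36"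
proof -
  have "(\<Sum>a\<in>{2..<c}. 1 / real a ^ 2) \<le> (\<Sum>a\<in>{2, 3} \<union> {4..c}. 1 / real a ^ 2)"
    by (intro sum_mono2) auto
  also have "\<dots> = 1 / 4 + 1 / 9 + (\<Sum>a\<in>{4..c}. 1 / real a ^ 2)"
    by (subst sum.union_disjoint) auto
  also have "(\<Sum>a\<in>{4..c}. 1 / real a ^ 2) \<le> 1 / 3"
    using sum_inverse_squares_le[of 4 c] by simp
  finally show ?thesis by simp
qed

lemma card_SP_less_le_sum_primes_pi:
  "card {m. m < n \<and> SP m} \<le> (\<Sum>a\<in>{2..n}. primes_pi (n div a ^ 2))"
proof -
  have "{m. m < n \<and> SP m} \<subseteq> (\<Union>a\<in>{2..n}. (\<lambda>p. p * a ^ 2) ` {p. p \<le> n div a ^ 2 \<and> prime p})"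
  proof
    fix m assume "m \<in> {m. m < n \<and> SP m}"
    then obtain p a where pa: "prime p" "2 \<le> a" "m = p * a ^ 2" "m < n"
      unfolding SP_def by auto
    have "a \<le> a ^ 2" by (simp add: power2_eq_square)
    also have "\<dots> \<le> p * a ^ 2" using pa by (simp add: Suc_le_eq prime_gt_0_nat)
    finally have "a \<le> n" using pa by simp
    moreover have "p \<le> n div a ^ 2"
      using pa by (simp add: less_eq_div_iff_mult_less_eq)
    ultimately show "m \<in> (\<Union>a\<in>{2..n}. (\<lambda>p. p * a ^ 2) ` {p. p \<le> n div a ^ 2 \<and> prime p})"
      using pa by auto
  qed
  then have "card {m. m < n \<and> SP m}
      \<le> card (\<Union>a\<in>{2..n}. (\<lambda>p. p * a ^ 2) ` {p. p \<le> n div a ^ 2 \<and> prime p})"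
    by (intro card_mono) auto
  also have "\<dots> \<le> (\<Sum>a\<in>{2..n}. card ((\<lambda>p. p * a ^ 2) ` {p. p \<le> n div a ^ 2 \<and> prime p}))"
    by (rule card_UN_le) simp
  also have "\<dots> \<le> (\<Sum>a\<in>{2..n}. primes_pi (n div a ^ 2))"
    unfolding primes_pi_def by (intro sum_mono card_image_le) simp
  finally show ?thesis .
qed

lemma sum_primes_pi_div_squares_tail:
  assumes "2 \<le> c"
  shows "(\<Sum>a\<in>{c..n}. real (primes_pi (n div a ^ 2))) \<le> n / (real c - 1)"
proof -
  have "(\<Sum>a\<in>{c..n}. real (primes_pi (n div a ^ 2))) \<le> (\<Sum>a\<in>{c..n}. n * (1 / real a ^ 2))"
  proof (rule sum_mono)
    fix a
    have "real (primes_pi (n div a ^ 2)) \<le> real (n div a ^ 2)"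
      using primes_pi_le by (rule of_nat_mono)
    also have "\<dots> \<le> n * (1 / real a ^ 2)"
      using of_nat_div_le_of_nat[of n "a ^ 2"] by simp
    finally show "real (primes_pi (n div a ^ 2)) \<le> n * (1 / real a ^ 2)" .
  qed
  also have "\<dots> \<le> n * (1 / (real c - 1))"
    unfolding sum_distrib_left[symmetric] using assms
    by (intro mult_left_mono sum_inverse_squares_le) auto
  finally show ?thesis by simp
qed

lemma primes_pi_div_square_le:
  assumes "1 < X"
  shows "real (primes_pi (n div a ^ 2))
    \<le> X + 6 / 5 * chebyshev_A * n / ln X * (1 / real a ^ 2) + 30 * sqrt n / ln X"
proof -
  have div_le: "real (n div a ^ 2) \<le> n / real a ^ 2" "real (n div a ^ 2) \<le> n"
    using of_nat_div_le_of_nat[of n "a ^ 2"] by simp_all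
  have "primes_psi (n div a ^ 2) \<le> 6 / 5 * chebyshev_A * (n div a ^ 2) + 30 * sqrt (n div a ^ 2)"
    by (rule primes_psi_upper)
  also have "\<dots> \<le> 6 / 5 * chebyshev_A * (n / real a ^ 2) + 30 * sqrt n"
    using div_le chebyshev_A_pos by (intro add_mono mult_left_mono real_sqrt_le_mono) auto
  finally have psi: "primes_psi (n div a ^ 2) \<le> 6 / 5 * chebyshev_A * (n / real a ^ 2) + 30 * sqrt n" .
  have "real (primes_pi (n div a ^ 2)) \<le> X + primes_psi (n div a ^ 2) / ln X"
    using assms by (rule primes_pi_le_primes_psi)
  also have "\<dots> \<le> X + (6 / 5 * chebyshev_A * (n / real a ^ 2) + 30 * sqrt n) / ln X"
    using psi assms by (simp add: divide_right_mono)
  also have "\<dots> = X + 6 / 5 * chebyshev_A * n / ln X * (1 / real a ^ 2) + 30 * sqrt n / ln X"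
    by (simp add: add_divide_distrib ac_simps)
  finally show ?thesis .
qed

lemma sum_primes_pi_div_squares_head:
  assumes "1 < X"
  shows "(\<Sum>a\<in>{2..<c}. real (primes_pi (n div a ^ 2)))
    \<le> real c * X + (5 / 6 * chebyshev_A * n + 30 * real c * sqrt n) / ln X"
proof -
  define K where "K = 6 / 5 * chebyshev_A * n / ln X"
  have "0 \<le> K" "0 < ln X" using assms chebyshev_A_pos by (simp_all add: K_def)
  have "(\<Sum>a\<in>{2..<c}. real (primes_pi (n div a ^ 2)))
      \<le> (\<Sum>a\<in>{2..<c}. X + K * (1 / real a ^ 2) + 30 * sqrt n / ln X)"
    unfolding K_def using assms by (intro sum_mono primes_pi_div_square_le)
  also have "\<dots> = real (c - 2) * X + K * (\<Sum>a\<in>{2..<c}. 1 / real a ^ 2)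
      + real (c - 2) * (30 * sqrt n / ln X)"
    by (simp add: sum.distrib sum_distrib_left)
  also have "\<dots> \<le> real c * X + K * (25 / 36) + real c * (30 * sqrt n / ln X)"
    using assms \<open>0 \<le> K\<close> \<open>0 < ln X\<close> sum_inverse_squares_from_2_le
    by (intro add_mono mult_right_mono mult_left_mono) auto
  also have "\<dots> = real c * X + (5 / 6 * chebyshev_A * n + 30 * real c * sqrt n) / ln X"
    using \<open>0 < ln X\<close> by (simp add: K_def field_simps)
  finally show ?thesis .
qed

lemma card_SP_less_le:
  fixes n c :: nat and X :: real
  assumes "2 \<le> c" "1 < X"
  shows "real (card {m. m < n \<and> SP m})
    \<le> n / (real c - 1) + real c * X + (5 / 6 * chebyshev_A * n + 30 * real c * sqrt n) / ln X"
proof -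
  have "{2..n} \<subseteq> {2..<c} \<union> {c..n}" by auto
  then have "(\<Sum>a\<in>{2..n}. real (primes_pi (n div a ^ 2)))
      \<le> (\<Sum>a\<in>{2..<c} \<union> {c..n}. real (primes_pi (n div a ^ 2)))"
    by (intro sum_mono2) auto
  also have "\<dots> = (\<Sum>a\<in>{2..<c}. real (primes_pi (n div a ^ 2)))
      + (\<Sum>a\<in>{c..n}. real (primes_pi (n div a ^ 2)))"
    by (intro sum.union_disjoint) auto
  finally show ?thesis
    using card_SP_less_le_sum_primes_pi[of n, THEN of_nat_mono[where 'a = real]]
      sum_primes_pi_div_squares_head[OF assms(2), of n c] sum_primes_pi_div_squares_tail[OF assms(1), of n]
    unfolding of_nat_sum by linarith
qed

text \<open>The two bounds below correspond to the choices \<open>c = \<lceil>ln\<^sup>2 x\<rceil>\<close> and \<open>X = x / ln\<^sup>4 x\<close> in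
  \<open>card_SP_less_le\<close>, and to \<open>\<pi>(n) ln n \<ge> \<psi>(n - 1)\<close>.\<close>

definition SP_count_bound :: "real \<Rightarrow> real \<Rightarrow> real" where
  "SP_count_bound A x = x / (ln x ^ 2 - 1) + (ln x ^ 2 + 1) * (x / ln x ^ 4)
     + (5 / 6 * A * x + 30 * (ln x ^ 2 + 1) * sqrt x) / ln (x / ln x ^ 4)"

definition primes_count_bound :: "real \<Rightarrow> real \<Rightarrow> real" where
  "primes_count_bound A x = (A * (x - 1) - 5 * (ln x + 1)) / ln x"

lemma card_SP_less_le_SP_count_bound:
  fixes n :: nat
  assumes "2 \<le> ln n" "1 < n / ln n ^ 4"
  shows "real (card {m. m < n \<and> SP m}) \<le> SP_count_bound chebyshev_A n"
proof -
  define c where "c = nat \<lceil>ln n ^ 2\<rceil>"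
  define X where "X = n / ln n ^ 4"
  have "2 ^ 2 \<le> ln n ^ 2"
    using assms(1) by (intro power_mono) auto
  then have "real c = of_int \<lceil>ln n ^ 2\<rceil>"
    unfolding c_def by simp
  then have c: "ln n ^ 2 \<le> c" "c \<le> ln n ^ 2 + 1"
    using le_of_int_ceiling[of "ln n ^ 2"] of_int_ceiling_le_add_one[of "ln n ^ 2"] by linarith+
  then have "real 2 \<le> real c"
    using \<open>2 ^ 2 \<le> ln n ^ 2\<close> by simp
  then have "2 \<le> c"
    by (simp only: of_nat_le_iff)
  have "0 < ln X" using assms(2) by (simp add: X_def)
  have "real (card {m. m < n \<and> SP m})
      \<le> n / (real c - 1) + real c * X + (5 / 6 * chebyshev_A * n + 30 * real c * sqrt n) / ln X"
    using \<open>2 \<le> c\<close> assms(2) unfolding X_def by (intro card_SP_less_le) auto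
  also have "n / (real c - 1) \<le> n / (ln n ^ 2 - 1)"
    using c \<open>2 ^ 2 \<le> ln n ^ 2\<close> by (intro divide_left_mono) auto
  also have "real c * X \<le> (ln n ^ 2 + 1) * X"
    using c assms(2) by (intro mult_right_mono) (auto simp: X_def)
  also have "(5 / 6 * chebyshev_A * n + 30 * real c * sqrt n) / ln X
      \<le> (5 / 6 * chebyshev_A * n + 30 * (ln n ^ 2 + 1) * sqrt n) / ln X"
    using c \<open>0 < ln X\<close> by (intro divide_right_mono add_left_mono mult_right_mono) auto
  finally show ?thesis
    unfolding SP_count_bound_def X_def by simp
qed

lemma primes_count_bound_le_card_primes_less:
  fixes n :: nat
  assumes "2 \<le> n"
  shows "primes_count_bound chebyshev_A n \<le> card {p. p < n \<and> prime p}"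
proof -
  have primes_less: "{p. p < n \<and> prime p} = {p. p \<le> n - 1 \<and> prime p}"
    using assms by auto
  have "chebyshev_A * (n - 1) - 5 * (ln n + 1) \<le> primes_psi (n - 1)"
    using primes_psi_lower[of "n - 1"] assms by (simp add: of_nat_diff)
  also have "\<dots> \<le> primes_pi (n - 1) * ln (n - 1)"
    by (rule primes_psi_le_primes_pi)
  also have "\<dots> \<le> primes_pi (n - 1) * ln n"
    using assms by (intro mult_left_mono) auto
  finally show ?thesis
    using assms unfolding primes_count_bound_def primes_pi_def primes_less
    by (simp add: divide_le_eq)
qed

lemma SP_count_bound_less_primes_count_bound:
  fixes A :: real
  assumes "0 < A"
  shows "\<forall>\<^sub>F x in at_top. SP_count_bound A x < primes_count_bound A x"
proof -
  \<comment> \<open>Only \<open>A\<close>-free terms go to \<open>real_asymp\<close>, which cannot use the sign of an unspecified constant.\<close>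
  define u where "u x = 5 / 6 * x / ln (x / ln x ^ 4)" for x :: real
  define v where "v x = x / (ln x ^ 2 - 1) + (ln x ^ 2 + 1) * (x / ln x ^ 4)
    + 30 * (ln x ^ 2 + 1) * sqrt x / ln (x / ln x ^ 4)" for x :: real
  define w where "w x = (x - 1) / ln x" for x :: real
  define z where "z x = 5 * (ln x + 1) / ln x" for x :: real
  have "((\<lambda>x. (v x + z x) / (w x - u x)) \<longlongrightarrow> 0) at_top"
    unfolding u_def v_def w_def z_def by real_asymp
  then have "\<forall>\<^sub>F x in at_top. (v x + z x) / (w x - u x) < A"
    using assms by (rule order_tendstoD)
  moreover have "\<forall>\<^sub>F x in at_top. 0 < w x - u x"
    unfolding u_def w_def by real_asymp
  ultimately show ?thesis
  proof eventually_elim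
    case (elim x)
    then have "v x + z x < A * (w x - u x)"
      by (simp add: divide_less_eq)
    moreover have "SP_count_bound A x = A * u x + v x"
      by (simp add: SP_count_bound_def u_def v_def add_divide_distrib)
    moreover have "primes_count_bound A x = A * w x - z x"
      by (simp add: primes_count_bound_def w_def z_def divide_simps)
    ultimately show ?case
      by (simp add: algebra_simps)
  qed
qed

theorem corollary1:
  shows "\<forall>\<^sub>F n in sequentially.
           card {m::nat. m < n \<and> SP m} < card {p::nat. p < n \<and> prime p}"
proof -
  have "\<forall>\<^sub>F x in at_top. 2 \<le> ln (x :: real)" "\<forall>\<^sub>F x in at_top. 1 < x / ln (x :: real) ^ 4"
    by real_asymp+
  with SP_count_bound_less_primes_count_bound[OF chebyshev_A_pos]
  have "\<forall>\<^sub>F x in at_top. 2 \<le> ln x \<and> 1 < x / ln x ^ 4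
      \<and> SP_count_bound chebyshev_A x < primes_count_bound chebyshev_A x"
    by eventually_elim blast
  then have "\<forall>\<^sub>F n in sequentially. 2 \<le> ln (real n) \<and> 1 < n / ln (real n) ^ 4
      \<and> SP_count_bound chebyshev_A n < primes_count_bound chebyshev_A n"
    by (rule eventually_compose_filterlim[OF _ filterlim_real_sequentially])
  with eventually_ge_at_top[of "2 :: nat"] show ?thesis
  proof eventually_elim
    case (elim n)
    then have "real (card {m. m < n \<and> SP m}) < real (card {p. p < n \<and> prime p})"
      using card_SP_less_le_SP_count_bound[of n] primes_count_bound_le_card_primes_less[of n]
      by linarith
    then show ?case by simp
  qed
qed
end
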